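(* Let $X=(X_t)_{t\ge0}$ be a Markov diffusion process in $\mathbb{R}^d$ with $X_0=x$, whose transition probabilities satisfy $\mathbb{P}[X_t\in dy\mid X_s=z]=p(s,z;t,y)dy$ for $z,y\in\mathbb{R}^d$, $0<s<t<\infty$, with $p(s,z;t,y)\le\kappa_1(2\pi\kappa_2(t-s))^{-d/2}\exp\big[-\frac{|y-z|^2}{2\kappa_2(t-s)}\big]$ for all $z,y$, $s<t$, where $\kappa_1,\kappa_2>0$ are constants. Let $B$ be a $d$-dimensional standard Brownian motion with $B_0=x$. Then for every $F=f(X_{t_1},\dots,X_{t_n})\in\mathcal{C}_n$ with $f\ge0$, $\mathbb{E}[f(X_{t_1},\dots,X_{t_n})]\le\kappa_1^n\,\mathbb{E}[f(B_{\kappa_2t_1},\dots,B_{\kappa_2t_n})]$.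
   Context: $\mathcal{C}_n$ is the set of cylindrical functionals $F=f(X_{t_1},\dots,X_{t_n})$ with $0<t_1,\dots,t_n<\infty$ and $f:\mathbb{R}^{nd}\to\mathbb{R}$ such that $\int_{D}|f(y_1,\dots,y_n)|dy_1\cdots dy_n$ is finite for every bounded domain $D\subset\mathbb{R}^{nd}$ and $f$ has polynomial growth. *)

theory Defs
  imports "HOL-Probability.Probability"
begin

definition gauss_kernel :: "real \<Rightarrow> real^'d \<Rightarrow> real^'d \<Rightarrow> real" where
  "gauss_kernel c z y =
     (2 * pi * c) powr (- real CARD('d) / 2) * exp (- (norm (y - z))\<^sup>2 / (2 * c))"

definition natural_filtration ::
  "'w measure \<Rightarrow> (real \<Rightarrow> 'w \<Rightarrow> real^'d) \<Rightarrow> real \<Rightarrow> 'w measure" where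
  "natural_filtration M X s =
     sigma (space M) {X u -` A \<inter> space M | u A. u \<in> {0..s} \<and> A \<in> sets (borel :: (real^'d) measure)}"

text \<open>Markov diffusion process started at x (continuous paths, X 0 = x a.s.)
  whose transition probabilities have densities p:
  P[X_t in A | F_s] = int_A p(s, X_s; t, y) dy for 0 < s < t, written out via the
  defining property of conditional probability w.r.t. the natural filtration.\<close>
definition markov_diffusion_with_density ::
  "'w measure \<Rightarrow> (real \<Rightarrow> 'w \<Rightarrow> real^'d) \<Rightarrow> real^'d
     \<Rightarrow> (real \<Rightarrow> real^'d \<Rightarrow> real \<Rightarrow> real^'d \<Rightarrow> real) \<Rightarrow> bool" where
  "markov_diffusion_with_density M X x p \<longleftrightarrow>
     prob_space M \<and>
     (\<forall>t. X t \<in> borel_measurable M) \<and>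
     (AE \<omega> in M. X 0 \<omega> = x) \<and>
     (AE \<omega> in M. continuous_on {0..} (\<lambda>t. X t \<omega>)) \<and>
     (\<forall>s z t y. p s z t y \<ge> 0) \<and>
     (\<forall>s z t. (\<lambda>y. p s z t y) \<in> borel_measurable borel) \<and>
     (\<forall>s t A G. 0 < s \<longrightarrow> s < t \<longrightarrow> A \<in> sets borel \<longrightarrow>
        G \<in> sets (natural_filtration M X s) \<longrightarrow>
        emeasure M ({\<omega> \<in> space M. X t \<omega> \<in> A} \<inter> G)
          = (\<integral>\<^sup>+ \<omega>. indicator G \<omega> * (\<integral>\<^sup>+ y. indicator A y * ennreal (p s (X s \<omega>) t y) \<partial>lborel) \<partial>M))"

definition std_brownian_motion ::
  "'w measure \<Rightarrow> (real \<Rightarrow> 'w \<Rightarrow> real^'d) \<Rightarrow> real^'d \<Rightarrow> bool" where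
  "std_brownian_motion N B x \<longleftrightarrow>
     prob_space N \<and>
     (\<forall>t. B t \<in> borel_measurable N) \<and>
     (AE \<omega> in N. B 0 \<omega> = x) \<and>
     (AE \<omega> in N. continuous_on {0..} (\<lambda>t. B t \<omega>)) \<and>
     (\<forall>s t. 0 \<le> s \<longrightarrow> s < t \<longrightarrow>
        distributed N lborel (\<lambda>\<omega>. B t \<omega> - B s \<omega>) (\<lambda>y. ennreal (gauss_kernel (t - s) 0 y))) \<and>
     (\<forall>(ts :: nat \<Rightarrow> real) m. 0 \<le> ts 0 \<longrightarrow> (\<forall>i<m. ts i \<le> ts (Suc i)) \<longrightarrow>
        prob_space.indep_vars N (\<lambda>_. borel) (\<lambda>i \<omega>. B (ts (Suc i)) \<omega> - B (ts i) \<omega>) {..<m})"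

definition cylindrical_fun :: "nat \<Rightarrow> ((nat \<Rightarrow> real^'d) \<Rightarrow> real) \<Rightarrow> bool" where
  "cylindrical_fun n f \<longleftrightarrow>
     f \<in> borel_measurable (PiM {..<n} (\<lambda>_. borel :: (real^'d) measure)) \<and>
     (\<forall>D \<in> sets (PiM {..<n} (\<lambda>_. lborel :: (real^'d) measure)).
        (\<exists>R. \<forall>y\<in>D. \<forall>i<n. norm (y i) \<le> R) \<longrightarrow>
        (\<integral>\<^sup>+ y. indicator D y * ennreal \<bar>f y\<bar> \<partial>(PiM {..<n} (\<lambda>_. lborel))) < \<infinity>) \<and>
     (\<exists>C (k::nat). \<forall>y \<in> PiE {..<n} (\<lambda>_. UNIV).
        \<bar>f y\<bar> \<le> C * (1 + (\<Sum>i<n. norm (y i))) ^ k)"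

end

theory Submission
  imports Defs
begin

text \<open>
  After sorting and merging the times into \<open>0 < s 0 < \<dots> < s (m - 1)\<close> with \<open>m \<le> n\<close>, the
  expectation under \<open>X\<close> is bounded one time at a time: conditioning on the path up to the previous
  time, the Markov property and the bound on \<open>p\<close> replace each transition by \<open>\<kappa>1\<close> times a Gaussian
  kernel. The resulting iterated Gaussian integral is the same expectation for \<open>B\<close> at the times
  \<open>\<kappa>2 * s j\<close>, since Brownian increments are independent and Gaussian. Integrating the bound on
  \<open>p\<close> shows \<open>1 \<le> \<kappa>1\<close>, so that \<open>\<kappa>1 ^ m \<le> \<kappa>1 ^ n\<close>.
\<close>

lemma semiring_of_sets_rectangles:
  "semiring_of_sets (space A \<times> space B) {a \<times> b | a b. a \<in> sets A \<and> b \<in> sets B}"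
proof
  show "{a \<times> b | a b. a \<in> sets A \<and> b \<in> sets B} \<subseteq> Pow (space A \<times> space B)"
  proof
    fix x
    assume "x \<in> {a \<times> b | a b. a \<in> sets A \<and> b \<in> sets B}"
    then obtain a b where "x = a \<times> b" "a \<in> sets A" "b \<in> sets B"
      by blast
    then show "x \<in> Pow (space A \<times> space B)"
      using sets.sets_into_space[of a A] sets.sets_into_space[of b B] by auto
  qed
  show "{} \<in> {a \<times> b | a b. a \<in> sets A \<and> b \<in> sets B}"
    by blast
next
  fix x y
  assume "x \<in> {a \<times> b | a b. a \<in> sets A \<and> b \<in> sets B}" "y \<in> {a \<times> b | a b. a \<in> sets A \<and> b \<in> sets B}"
  then obtain a b c d where xy: "x = a \<times> b" "y = c \<times> d"
    and sets: "a \<in> sets A" "b \<in> sets B" "c \<in> sets A" "d \<in> sets B"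
    by blast
  have "x \<inter> y = (a \<inter> c) \<times> (b \<inter> d)"
    using xy by auto
  then show "x \<inter> y \<in> {a \<times> b | a b. a \<in> sets A \<and> b \<in> sets B}"
    using sets by blast
  have "x - y = \<Union>{(a - c) \<times> b, (a \<inter> c) \<times> (b - d)}" and "disjoint {(a - c) \<times> b, (a \<inter> c) \<times> (b - d)}"
    using xy by (auto simp: disjoint_def)
  moreover have "{(a - c) \<times> b, (a \<inter> c) \<times> (b - d)} \<subseteq> {a \<times> b | a b. a \<in> sets A \<and> b \<in> sets B}"
    using sets by blast
  ultimately show "\<exists>C\<subseteq>{a \<times> b | a b. a \<in> sets A \<and> b \<in> sets B}. finite C \<and> disjoint C \<and> x - y = \<Union>C"
    by blast
qed

lemma countably_additive_emeasure_diff: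
  assumes "finite_measure M1" and G: "G \<subseteq> sets M1" "G \<subseteq> sets M2"
    and le: "\<And>A. A \<in> G \<Longrightarrow> emeasure M1 A \<le> emeasure M2 A"
  shows "countably_additive G (\<lambda>A. emeasure M2 A - emeasure M1 A)"
proof (rule countably_additiveI)
  interpret finite_measure M1 by fact
  fix A :: "nat \<Rightarrow> _"
  assume A: "range A \<subseteq> G" "disjoint_family A" "(\<Union>i. A i) \<in> G"
  have "(\<Sum>i. emeasure M2 (A i) - emeasure M1 (A i)) + emeasure M1 (\<Union>i. A i)
      = (\<Sum>i. emeasure M2 (A i) - emeasure M1 (A i)) + (\<Sum>i. emeasure M1 (A i))"
    using A G by (simp add: suminf_emeasure)
  also have "\<dots> = (\<Sum>i. emeasure M2 (A i))"
    using A le by (subst suminf_add) (auto intro!: suminf_cong diff_add_cancel_ennreal)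
  also have "\<dots> = emeasure M2 (\<Union>i. A i)"
    using A G by (intro suminf_emeasure) auto
  finally show "(\<Sum>i. emeasure M2 (A i) - emeasure M1 (A i))
      = emeasure M2 (\<Union>i. A i) - emeasure M1 (\<Union>i. A i)"
    by (metis emeasure_finite ennreal_add_diff_cancel_right)
qed

lemma countably_additive_add:
  fixes f g :: "'a set \<Rightarrow> ennreal"
  assumes "countably_additive A f" "countably_additive A g"
  shows "countably_additive A (\<lambda>X. f X + g X)"
  using assms unfolding countably_additive_def by (simp add: suminf_add[symmetric] summableI)

text \<open>\<open>M2\<close> is \<open>M1\<close> plus the Caratheodory extension of \<open>M2 - M1\<close> from the semiring.\<close>
lemma measure_leI_generator:
  assumes "semiring_of_sets \<Omega> G" and \<Omega>: "\<Omega> \<in> G"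
    and sets: "sets M1 = sigma_sets \<Omega> G" "sets M2 = sigma_sets \<Omega> G"
    and fin: "finite_measure M1" "finite_measure M2"
    and le: "\<And>A. A \<in> G \<Longrightarrow> emeasure M1 A \<le> emeasure M2 A"
  shows "M1 \<le> M2"
proof -
  interpret semiring_of_sets \<Omega> G by fact
  have G: "G \<subseteq> sets M1" "G \<subseteq> sets M2"
    using sets by auto
  obtain \<mu> where \<mu>: "\<forall>A\<in>G. \<mu> A = emeasure M2 A - emeasure M1 A"
    and ms: "measure_space \<Omega> (sigma_sets \<Omega> G) \<mu>"
    using caratheodory[OF _ countably_additive_emeasure_diff[OF fin(1) G le]]
    by (auto simp: positive_def)
  define \<nu> where "\<nu> A = emeasure M1 A + \<mu> A" for A
  have "countably_additive (sigma_sets \<Omega> G) \<nu>"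
    unfolding \<nu>_def using emeasure_countably_additive[of M1] ms
    by (intro countably_additive_add) (simp_all add: sets(1) measure_space_def)
  moreover have "positive (sigma_sets \<Omega> G) \<nu>"
    using ms unfolding \<nu>_def positive_def measure_space_def by (simp add: sets(1)[symmetric])
  ultimately have emeasure_N: "emeasure (measure_of \<Omega> (sigma_sets \<Omega> G) \<nu>) A = \<nu> A"
    if "A \<in> sigma_sets \<Omega> G" for A
    using that by (intro emeasure_measure_of_sigma sigma_algebra_sigma_sets space_closed)
  have sets_N: "sets (measure_of \<Omega> (sigma_sets \<Omega> G) \<nu>) = sigma_sets \<Omega> G"
    by (simp add: sigma_algebra.sets_measure_of_eq sigma_algebra_sigma_sets space_closed)
  have "measure_of \<Omega> (sigma_sets \<Omega> G) \<nu> = M2"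
  proof (rule measure_eqI_generator_eq[where A="\<lambda>_. \<Omega>"])
    show "Int_stable G"
      by (auto simp: Int_stable_def)
    show "emeasure (measure_of \<Omega> (sigma_sets \<Omega> G) \<nu>) A = emeasure M2 A" if "A \<in> G" for A
      using that emeasure_N[of A] \<mu> le[of A] unfolding \<nu>_def by (simp add: add.commute diff_add_cancel_ennreal)
    show "emeasure (measure_of \<Omega> (sigma_sets \<Omega> G) \<nu>) \<Omega> \<noteq> \<infinity>"
      using \<Omega> emeasure_N[of \<Omega>] \<mu> le[of \<Omega>] fin[THEN finite_measure.emeasure_finite]
      unfolding \<nu>_def by (simp add: add.commute diff_add_cancel_ennreal)
  qed (use sets_N sets \<Omega> space_closed in auto)
  then show ?thesis
    using sets emeasure_N unfolding \<nu>_def by (auto simp: le_measure)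
qed

lemma nn_integral_pair_distr:
  assumes "sigma_finite_measure N" and Y: "Y \<in> measurable M S"
    and F: "F \<in> borel_measurable (S \<Otimes>\<^sub>M N)"
  shows "(\<integral>\<^sup>+ q. F q \<partial>(distr M S Y \<Otimes>\<^sub>M N)) = (\<integral>\<^sup>+ \<omega>. \<integral>\<^sup>+ y. F (Y \<omega>, y) \<partial>N \<partial>M)"
proof -
  interpret N: sigma_finite_measure N by fact
  have sets: "sets (distr M S Y \<Otimes>\<^sub>M N) = sets (S \<Otimes>\<^sub>M N)"
    by (rule sets_pair_measure_cong) auto
  have "(\<integral>\<^sup>+ q. F q \<partial>(distr M S Y \<Otimes>\<^sub>M N)) = (\<integral>\<^sup>+ z. \<integral>\<^sup>+ y. F (z, y) \<partial>N \<partial>distr M S Y)"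
    using F by (intro N.nn_integral_fst[symmetric]) (simp add: measurable_cong_sets[OF sets refl])
  also have "\<dots> = (\<integral>\<^sup>+ \<omega>. \<integral>\<^sup>+ y. F (Y \<omega>, y) \<partial>N \<partial>M)"
    using F Y by (intro nn_integral_distr) (auto intro: N.borel_measurable_nn_integral)
  finally show ?thesis .
qed

lemma nn_integral_lborel_translate:
  fixes z :: "'a::euclidean_space"
  assumes "f \<in> borel_measurable borel"
  shows "(\<integral>\<^sup>+ y. f y \<partial>lborel) = (\<integral>\<^sup>+ u. f (z + u) \<partial>lborel)"
proof -
  have "(\<integral>\<^sup>+ y. f y \<partial>lborel) = (\<integral>\<^sup>+ y. f y \<partial>distr lborel borel ((+) z))"
    by (simp add: lborel_distr_plus)
  also have "\<dots> = (\<integral>\<^sup>+ u. f (z + u) \<partial>lborel)"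
    using assms by (subst nn_integral_distr) auto
  finally show ?thesis .
qed

lemma (in prob_space) nn_integral_indep_var:
  assumes indep: "indep_var S Y T D" and H: "H \<in> borel_measurable (S \<Otimes>\<^sub>M T)"
  shows "(\<integral>\<^sup>+ \<omega>. H (Y \<omega>, D \<omega>) \<partial>M) = (\<integral>\<^sup>+ \<omega>. \<integral>\<^sup>+ d. H (Y \<omega>, d) \<partial>distr M T D \<partial>M)"
proof -
  have rv[measurable]: "Y \<in> measurable M S" "D \<in> measurable M T"
    using indep by (auto dest: indep_var_rv1 indep_var_rv2)
  have "(\<integral>\<^sup>+ \<omega>. H (Y \<omega>, D \<omega>) \<partial>M) = (\<integral>\<^sup>+ q. H q \<partial>distr M (S \<Otimes>\<^sub>M T) (\<lambda>\<omega>. (Y \<omega>, D \<omega>)))"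
    using H by (subst nn_integral_distr) auto
  also have "\<dots> = (\<integral>\<^sup>+ q. H q \<partial>(distr M S Y \<Otimes>\<^sub>M distr M T D))"
    using indep by (simp add: indep_var_distribution_eq)
  also have "\<dots> = (\<integral>\<^sup>+ \<omega>. \<integral>\<^sup>+ d. H (Y \<omega>, d) \<partial>distr M T D \<partial>M)"
    using H rv by (intro nn_integral_pair_distr prob_space_imp_sigma_finite prob_space_distr)
      (simp_all add: measurable_cong_sets[OF sets_pair_measure_cong[OF refl, of "distr M T D" T] refl])
  finally show ?thesis .
qed

lemma restrict_lessThan_Suc: "(\<lambda>j\<in>{..<Suc k}. f j) = (\<lambda>j\<in>{..<k}. f j)(k := f k)"
  by (auto simp: restrict_def fun_eq_iff)

lemma measurable_fun_upd_lessThan[measurable]: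
  assumes "f \<in> measurable N (PiM {..<k} M)" "g \<in> measurable N (M k)"
  shows "(\<lambda>\<omega>. (f \<omega>)(k := g \<omega>)) \<in> measurable N (PiM {..<Suc k} M)"
  by (rule measurable_fun_upd[OF _ assms]) auto

lemma obtain_strict_mono_enumeration:
  fixes t :: "nat \<Rightarrow> 'a::linorder"
  obtains m s \<sigma> where "m \<le> n" "strict_mono_on {..<m} s" "\<And>j. j < m \<Longrightarrow> s j \<in> t ` {..<n}"
    "\<And>i. i < n \<Longrightarrow> \<sigma> i < m \<and> s (\<sigma> i) = t i"
proof -
  define L where "L = sorted_list_of_set (t ` {..<n})"
  have set_L: "set L = t ` {..<n}" and sorted_L: "sorted_wrt (<) L"
    unfolding L_def by simp_all
  have "length L \<le> n"
    unfolding L_def by (metis card_image_le card_lessThan finite_lessThan length_sorted_list_of_set)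
  moreover have "strict_mono_on {..<length L} (\<lambda>j. L ! j)"
    using sorted_L by (auto intro!: strict_mono_onI simp: sorted_wrt_iff_nth_less)
  moreover have "\<forall>i<n. \<exists>j. j < length L \<and> L ! j = t i"
    using set_L by (auto simp: in_set_conv_nth[symmetric])
  then obtain \<sigma> where "\<And>i. i < n \<Longrightarrow> \<sigma> i < length L \<and> L ! \<sigma> i = t i"
    by metis
  ultimately show thesis
    using set_L by (intro that[of "length L" "\<lambda>j. L ! j" \<sigma>]) auto
qed

lemma obtain_strict_mono_reindexing:
  fixes t :: "nat \<Rightarrow> 'b::linorder" and f :: "(nat \<Rightarrow> 'a::topological_space) \<Rightarrow> real"
  assumes f: "f \<in> borel_measurable (PiM {..<n} (\<lambda>_. borel))"
  obtains m s h where "m \<le> n" "strict_mono_on {..<m} s" "\<And>j. j < m \<Longrightarrow> s j \<in> t ` {..<n}"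
    "h \<in> borel_measurable (PiM {..<m} (\<lambda>_. borel))"
    "\<And>Z. ennreal (f (\<lambda>i\<in>{..<n}. Z (t i))) = h (\<lambda>j\<in>{..<m}. Z (s j))"
proof -
  obtain m s \<sigma> where m_s: "m \<le> n" "strict_mono_on {..<m} s" "\<And>j. j < m \<Longrightarrow> s j \<in> t ` {..<n}"
    and \<sigma>: "\<And>i. i < n \<Longrightarrow> \<sigma> i < m \<and> s (\<sigma> i) = t i"
    using obtain_strict_mono_enumeration[where t = t and n = n] by blast
  have [measurable]: "(\<lambda>z. \<lambda>i\<in>{..<n}. z (\<sigma> i)) \<in> measurable (PiM {..<m} (\<lambda>_. borel)) (PiM {..<n} (\<lambda>_. borel :: 'a measure))"
    using \<sigma> by (intro measurable_restrict measurable_component_singleton) auto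
  have "(\<lambda>z. ennreal (f (\<lambda>i\<in>{..<n}. z (\<sigma> i)))) \<in> borel_measurable (PiM {..<m} (\<lambda>_. borel))"
    using f by measurable
  moreover have "ennreal (f (\<lambda>i\<in>{..<n}. Z (t i))) = ennreal (f (\<lambda>i\<in>{..<n}. (\<lambda>j\<in>{..<m}. Z (s j)) (\<sigma> i)))" for Z
    using \<sigma> by (auto simp: fun_eq_iff intro!: arg_cong[where f="\<lambda>y. ennreal (f y)"])
  ultimately show thesis
    using that[where h = "\<lambda>z. ennreal (f (\<lambda>i\<in>{..<n}. z (\<sigma> i)))"] m_s by blast
qed

lemma gauss_kernel_nonneg[simp]: "0 \<le> gauss_kernel c z y"
  unfolding gauss_kernel_def by simp

lemma gauss_kernel_translate: "gauss_kernel c z y = gauss_kernel c 0 (y - z)"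
  unfolding gauss_kernel_def by simp

lemma borel_measurable_gauss_kernel[measurable]:
  assumes [measurable]: "f \<in> borel_measurable M" "g \<in> borel_measurable M"
  shows "(\<lambda>\<omega>. gauss_kernel c (f \<omega> :: real^'d) (g \<omega>)) \<in> borel_measurable M"
  unfolding gauss_kernel_def by measurable

lemma gauss_kernel_eq_prod_normal_density:
  fixes z y :: "real^'d"
  assumes "0 < c"
  shows "gauss_kernel c z y = (\<Prod>b\<in>Basis. normal_density (z \<bullet> b) (sqrt c) (y \<bullet> b))"
proof -
  have norm: "(norm (y - z))\<^sup>2 = (\<Sum>b\<in>Basis. (y \<bullet> b - z \<bullet> b)\<^sup>2)"
    by (subst power2_norm_eq_inner, subst euclidean_inner) (simp add: inner_diff_left power2_eq_square)
  have const: "(2 * pi * c) powr (- real CARD('d) / 2) = (\<Prod>b\<in>(Basis::(real^'d) set). 1 / sqrt (2 * pi * c))"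
  proof -
    define a where "a = 2 * pi * c"
    have "0 < a"
      using assms by (simp add: a_def)
    have "(\<Prod>b\<in>(Basis::(real^'d) set). 1 / sqrt a) = (a powr (- 1 / 2)) ^ CARD('d)"
      using \<open>0 < a\<close> by (simp add: powr_half_sqrt[symmetric] powr_minus_divide)
    also have "\<dots> = a powr (- real CARD('d) / 2)"
      using \<open>0 < a\<close> by (subst powr_power) (simp_all add: field_simps)
    finally show ?thesis
      unfolding a_def ..
  qed
  have "(\<Prod>b\<in>Basis. normal_density (z \<bullet> b) (sqrt c) (y \<bullet> b))
      = (\<Prod>b\<in>Basis. 1 / sqrt (2 * pi * c) * exp (- (y \<bullet> b - z \<bullet> b)\<^sup>2 / (2 * c)))"
    using assms by (intro prod.cong) (simp_all add: normal_density_def)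
  also have "\<dots> = (\<Prod>b\<in>(Basis::(real^'d) set). 1 / sqrt (2 * pi * c)) * (\<Prod>b\<in>Basis. exp (- (y \<bullet> b - z \<bullet> b)\<^sup>2 / (2 * c)))"
    by (rule prod.distrib)
  also have "\<dots> = gauss_kernel c z y"
    unfolding gauss_kernel_def const norm by (simp add: exp_sum[symmetric] sum_divide_distrib sum_negf)
  finally show ?thesis ..
qed

lemma nn_integral_gauss_kernel:
  fixes z :: "real^'d"
  assumes "0 < c"
  shows "(\<integral>\<^sup>+ y. ennreal (gauss_kernel c z y) \<partial>lborel) = 1"
proof -
  have "(\<integral>\<^sup>+ y. ennreal (gauss_kernel c z y) \<partial>lborel)
      = (\<integral>\<^sup>+ y. (\<Prod>b\<in>Basis. ennreal (normal_density (z \<bullet> b) (sqrt c) (y \<bullet> b))) \<partial>lborel)"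
    using assms by (simp add: gauss_kernel_eq_prod_normal_density prod_ennreal)
  also have "\<dots> = (\<Prod>b\<in>(Basis::(real^'d) set). \<integral>\<^sup>+ u. ennreal (normal_density (z \<bullet> b) (sqrt c) u) \<partial>lborel)"
    by (rule nn_integral_lborel_prod) auto
  also have "\<dots> = 1"
    using assms by (subst nn_integral_eq_integral) auto
  finally show ?thesis .
qed

definition gauss_measure :: "real \<Rightarrow> real^'d \<Rightarrow> (real^'d) measure" where
  "gauss_measure c z = density lborel (\<lambda>y. ennreal (gauss_kernel c z y))"

lemma emeasure_gauss_measure:
  assumes "C \<in> sets borel"
  shows "emeasure (gauss_measure c z) C = (\<integral>\<^sup>+ y. ennreal (gauss_kernel c z y) * indicator C y \<partial>lborel)"
  unfolding gauss_measure_def using assms by (subst emeasure_density) auto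

lemma borel_measurable_emeasure_gauss_measure[measurable]:
  assumes [measurable]: "C \<in> sets borel" "f \<in> borel_measurable M"
  shows "(\<lambda>\<omega>. emeasure (gauss_measure c (f \<omega>)) C) \<in> borel_measurable M"
  by (subst emeasure_gauss_measure) measurable

lemma prob_space_gauss_measure: "0 < c \<Longrightarrow> prob_space (gauss_measure c z)"
  by (rule prob_spaceI) (simp add: gauss_measure_def emeasure_density nn_integral_gauss_kernel)

lemma gauss_measure_add_compl:
  assumes "0 < c" "C \<in> sets borel"
  shows "emeasure (gauss_measure c z) C + emeasure (gauss_measure c z) (- C) = 1"
proof -
  interpret prob_space "gauss_measure c z"
    using assms(1) by (rule prob_space_gauss_measure)
  have "emeasure (gauss_measure c z) C + emeasure (gauss_measure c z) (- C)
      = emeasure (gauss_measure c z) (space (gauss_measure c z))"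
    using assms by (subst plus_emeasure) (auto simp: gauss_measure_def)
  then show ?thesis
    by (simp add: emeasure_space_1)
qed

lemma space_natural_filtration: "space (natural_filtration M X s) = space M"
  unfolding natural_filtration_def by (rule space_measure_of) blast

lemma sets_natural_filtration:
  "sets (natural_filtration M X s) = sigma_sets (space M)
    {X u -` A \<inter> space M | u A. u \<in> {0..s} \<and> A \<in> sets (borel :: (real^'d) measure)}"
  unfolding natural_filtration_def by (rule sets_measure_of) blast

lemma measurable_natural_filtration:
  fixes X :: "real \<Rightarrow> 'w \<Rightarrow> real^'d"
  assumes "0 \<le> u" "u \<le> s"
  shows "X u \<in> measurable (natural_filtration M X s) borel"
proof (rule measurableI)
  fix A :: "(real^'d) set"
  assume "A \<in> sets borel"
  then have "X u -` A \<inter> space M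
      \<in> {X u -` A \<inter> space M | u A. u \<in> {0..s} \<and> A \<in> sets (borel :: (real^'d) measure)}"
    using assms by auto
  then show "X u -` A \<inter> space (natural_filtration M X s) \<in> sets (natural_filtration M X s)"
    unfolding space_natural_filtration sets_natural_filtration by (rule sigma_sets.Basic)
qed (simp add: space_natural_filtration)

text \<open>\<open>gauss_chain x c k h\<close> is the iterated Gaussian integral that computes the expectation of
  \<open>h\<close> at the times \<open>c 0, \<dots>, c (k - 1)\<close> of a Brownian motion started at \<open>x\<close> at time \<open>0\<close>;
  accordingly, before index \<open>0\<close> the time is \<open>0\<close> and the position is \<open>x\<close>.\<close>
definition prev_time :: "(nat \<Rightarrow> real) \<Rightarrow> nat \<Rightarrow> real" where
  "prev_time c k = (if k = 0 then 0 else c (k - 1))"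

definition prev_point :: "real^'d \<Rightarrow> nat \<Rightarrow> (nat \<Rightarrow> real^'d) \<Rightarrow> real^'d" where
  "prev_point x k z = (if k = 0 then x else z (k - 1))"

definition gauss_step ::
  "real^'d \<Rightarrow> (nat \<Rightarrow> real) \<Rightarrow> nat \<Rightarrow> ((nat \<Rightarrow> real^'d) \<Rightarrow> ennreal) \<Rightarrow> (nat \<Rightarrow> real^'d) \<Rightarrow> ennreal"
  where "gauss_step x c k h z =
    (\<integral>\<^sup>+ y. h (z(k := y)) * ennreal (gauss_kernel (c k - prev_time c k) (prev_point x k z) y) \<partial>lborel)"

fun gauss_chain :: "real^'d \<Rightarrow> (nat \<Rightarrow> real) \<Rightarrow> nat \<Rightarrow> ((nat \<Rightarrow> real^'d) \<Rightarrow> ennreal) \<Rightarrow> ennreal" where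
  "gauss_chain x c 0 h = h (\<lambda>_. undefined)"
| "gauss_chain x c (Suc k) h = gauss_chain x c k (gauss_step x c k h)"

lemma borel_measurable_prev_point[measurable]:
  "prev_point x k \<in> borel_measurable (PiM {..<k} (\<lambda>_. borel :: (real^'d) measure))"
  by (cases k) (simp_all add: prev_point_def[abs_def] measurable_component_singleton)

lemma borel_measurable_gauss_step[measurable]:
  assumes [measurable]: "h \<in> borel_measurable (PiM {..<Suc k} (\<lambda>_. borel :: (real^'d) measure))"
  shows "gauss_step x c k h \<in> borel_measurable (PiM {..<k} (\<lambda>_. borel :: (real^'d) measure))"
proof -
  have "(\<lambda>q. h ((fst q)(k := snd q)) * ennreal (gauss_kernel (c k - prev_time c k) (prev_point x k (fst q)) (snd q)))
      \<in> borel_measurable (PiM {..<k} (\<lambda>_. borel :: (real^'d) measure) \<Otimes>\<^sub>M lborel)"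
    by measurable
  then show ?thesis
    unfolding gauss_step_def by (rule lborel.borel_measurable_nn_integral[unfolded case_prod_beta'])
qed

locale gaussian_dominated_diffusion =
  fixes M :: "'w measure" and X :: "real \<Rightarrow> 'w \<Rightarrow> real^'d" and x :: "real^'d"
    and p :: "real \<Rightarrow> real^'d \<Rightarrow> real \<Rightarrow> real^'d \<Rightarrow> real"
    and \<kappa>1 \<kappa>2 :: real
  assumes markov_diffusion: "markov_diffusion_with_density M X x p"
    and \<kappa>1_pos: "0 < \<kappa>1" and \<kappa>2_pos: "0 < \<kappa>2"
    and density_le: "\<And>s t z y. 0 < s \<Longrightarrow> s < t \<Longrightarrow> p s z t y \<le> \<kappa>1 * gauss_kernel (\<kappa>2 * (t - s)) z y"
begin

sublocale prob_space M
  using markov_diffusion by (simp add: markov_diffusion_with_density_def)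

lemma measurable_X[measurable]: "X t \<in> borel_measurable M"
  using markov_diffusion by (simp add: markov_diffusion_with_density_def)

lemma AE_X_0: "AE \<omega> in M. X 0 \<omega> = x"
  using markov_diffusion by (simp add: markov_diffusion_with_density_def)

lemma AE_X_continuous: "AE \<omega> in M. continuous_on {0..} (\<lambda>t. X t \<omega>)"
  using markov_diffusion by (simp add: markov_diffusion_with_density_def)

lemma ennreal_density_le:
  assumes "0 < s" "s < t"
  shows "ennreal (p s z t y) \<le> \<kappa>1 * ennreal (gauss_kernel (\<kappa>2 * (t - s)) z y)"
  using density_le[OF assms] \<kappa>1_pos by (simp add: ennreal_mult[symmetric] ennreal_leI)

lemma emeasure_transition_le:
  assumes "0 < s" "s < t" "A \<in> sets borel" "G \<in> sets (natural_filtration M X s)"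
  shows "emeasure M ({\<omega> \<in> space M. X t \<omega> \<in> A} \<inter> G)
    \<le> (\<integral>\<^sup>+ \<omega>. indicator G \<omega> *
          (\<integral>\<^sup>+ y. indicator A y * (\<kappa>1 * ennreal (gauss_kernel (\<kappa>2 * (t - s)) (X s \<omega>) y)) \<partial>lborel) \<partial>M)"
    (is "_ \<le> ?rhs")
proof -
  have "emeasure M ({\<omega> \<in> space M. X t \<omega> \<in> A} \<inter> G)
      = (\<integral>\<^sup>+ \<omega>. indicator G \<omega> * (\<integral>\<^sup>+ y. indicator A y * ennreal (p s (X s \<omega>) t y) \<partial>lborel) \<partial>M)"
    using markov_diffusion assms unfolding markov_diffusion_with_density_def by blast
  also have "\<dots> \<le> ?rhs"
    using assms by (intro nn_integral_mono mult_left_mono) (auto simp: ennreal_density_le)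
  finally show ?thesis .
qed

lemma distr_past_future_le:
  fixes S :: "'s measure" and Y :: "'w \<Rightarrow> 's"
  assumes st: "0 < s" "s < t"
    and Y[measurable]: "Y \<in> measurable M S" and Y_adapted: "Y \<in> measurable (natural_filtration M X s) S"
    and \<pi>[measurable]: "\<pi> \<in> borel_measurable S" and \<pi>_Y: "\<And>\<omega>. \<omega> \<in> space M \<Longrightarrow> \<pi> (Y \<omega>) = X s \<omega>"
  shows "distr M (S \<Otimes>\<^sub>M lborel) (\<lambda>\<omega>. (Y \<omega>, X t \<omega>))
    \<le> density (distr M S Y \<Otimes>\<^sub>M lborel) (\<lambda>q. \<kappa>1 * ennreal (gauss_kernel (\<kappa>2 * (t - s)) (\<pi> (fst q)) (snd q)))"
    (is "?\<nu>1 \<le> density ?D ?g")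
proof -
  have sets_D: "sets ?D = sets (S \<Otimes>\<^sub>M lborel)"
    by (auto intro!: sets_pair_measure_cong)
  have emeasure_\<nu>2: "emeasure (density ?D ?g) A = (\<integral>\<^sup>+ \<omega>. \<integral>\<^sup>+ y. ?g (Y \<omega>, y) * indicator A (Y \<omega>, y) \<partial>lborel \<partial>M)"
    if [measurable]: "A \<in> sets (S \<Otimes>\<^sub>M lborel)" for A
  proof -
    have [measurable]: "A \<in> sets (S \<Otimes>\<^sub>M borel)"
      using that sets_pair_measure_cong[of S S lborel borel] by simp
    have "emeasure (density ?D ?g) A = (\<integral>\<^sup>+ q. ?g q * indicator A q \<partial>?D)"
      using sets_D by (subst emeasure_density) (auto simp: measurable_cong_sets[OF sets_D refl])
    also have "\<dots> = (\<integral>\<^sup>+ \<omega>. \<integral>\<^sup>+ y. ?g (Y \<omega>, y) * indicator A (Y \<omega>, y) \<partial>lborel \<partial>M)"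
      by (rule nn_integral_pair_distr[OF sigma_finite_lborel Y]) measurable
    finally show ?thesis .
  qed
  show ?thesis
  proof (rule measure_leI_generator[OF semiring_of_sets_rectangles])
    show "space S \<times> space lborel \<in> {a \<times> b | a b. a \<in> sets S \<and> b \<in> sets lborel}"
      by blast
    show "sets ?\<nu>1 = sigma_sets (space S \<times> space lborel) {a \<times> b | a b. a \<in> sets S \<and> b \<in> sets lborel}"
      "sets (density ?D ?g) = sigma_sets (space S \<times> space lborel) {a \<times> b | a b. a \<in> sets S \<and> b \<in> sets lborel}"
      using sets_D by (simp_all add: sets_pair_measure)
    show "finite_measure ?\<nu>1"
      by (intro prob_space.finite_measure prob_space_distr) simp
    have "emeasure (density ?D ?g) (space (density ?D ?g))
        = (\<integral>\<^sup>+ \<omega>. \<integral>\<^sup>+ y. \<kappa>1 * ennreal (gauss_kernel (\<kappa>2 * (t - s)) (X s \<omega>) y) \<partial>lborel \<partial>M)"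
      using emeasure_\<nu>2[of "space S \<times> UNIV"] sets_D
      by (auto simp: space_pair_measure \<pi>_Y measurable_space[OF Y] intro!: nn_integral_cong)
    also have "\<dots> = \<kappa>1"
      using st \<kappa>2_pos by (simp add: nn_integral_cmult nn_integral_gauss_kernel emeasure_space_1)
    finally show "finite_measure (density ?D ?g)"
      by (intro finite_measureI) simp
  next
    fix A
    assume "A \<in> {a \<times> b | a b. a \<in> sets S \<and> b \<in> sets (lborel :: (real^'d) measure)}"
    then obtain a b where A: "A = a \<times> b" and [measurable]: "a \<in> sets S" "b \<in> sets borel"
      by auto
    define G where "G = Y -` a \<inter> space M"
    have G: "G \<in> sets (natural_filtration M X s)"
      using measurable_sets[OF Y_adapted] unfolding G_def space_natural_filtration by simp
    have "emeasure ?\<nu>1 A = emeasure M ({\<omega> \<in> space M. X t \<omega> \<in> b} \<inter> G)"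
      unfolding A G_def by (subst emeasure_distr) (auto intro!: arg_cong[where f="emeasure M"])
    also have "\<dots> \<le> (\<integral>\<^sup>+ \<omega>. indicator G \<omega> *
        (\<integral>\<^sup>+ y. indicator b y * (\<kappa>1 * ennreal (gauss_kernel (\<kappa>2 * (t - s)) (X s \<omega>) y)) \<partial>lborel) \<partial>M)"
      using st G by (intro emeasure_transition_le) auto
    also have "\<dots> = (\<integral>\<^sup>+ \<omega>. \<integral>\<^sup>+ y. ?g (Y \<omega>, y) * indicator A (Y \<omega>, y) \<partial>lborel \<partial>M)"
      by (intro nn_integral_cong, rename_tac \<omega>, case_tac "Y \<omega> \<in> a")
        (auto simp: G_def A \<pi>_Y indicator_times ac_simps)
    also have "\<dots> = emeasure (density ?D ?g) A"
      unfolding A by (intro emeasure_\<nu>2[symmetric] pair_measureI) auto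
    finally show "emeasure ?\<nu>1 A \<le> emeasure (density ?D ?g) A" .
  qed
qed

lemma nn_integral_transition_le:
  fixes S :: "'s measure" and Y :: "'w \<Rightarrow> 's"
  assumes st: "0 < s" "s < t"
    and Y[measurable]: "Y \<in> measurable M S" and Y_adapted: "Y \<in> measurable (natural_filtration M X s) S"
    and \<pi>[measurable]: "\<pi> \<in> borel_measurable S" and \<pi>_Y: "\<And>\<omega>. \<omega> \<in> space M \<Longrightarrow> \<pi> (Y \<omega>) = X s \<omega>"
    and h: "h \<in> borel_measurable (S \<Otimes>\<^sub>M borel)"
  shows "(\<integral>\<^sup>+ \<omega>. h (Y \<omega>, X t \<omega>) \<partial>M)
    \<le> \<kappa>1 * (\<integral>\<^sup>+ \<omega>. \<integral>\<^sup>+ y. h (Y \<omega>, y) * ennreal (gauss_kernel (\<kappa>2 * (t - s)) (X s \<omega>) y) \<partial>lborel \<partial>M)"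
proof -
  let ?g = "\<lambda>q. \<kappa>1 * ennreal (gauss_kernel (\<kappa>2 * (t - s)) (\<pi> (fst q)) (snd q))"
  have sets_D: "sets (distr M S Y \<Otimes>\<^sub>M lborel) = sets (S \<Otimes>\<^sub>M lborel)"
    by (auto intro!: sets_pair_measure_cong)
  have [measurable]: "h \<in> borel_measurable (S \<Otimes>\<^sub>M lborel)"
    using h sets_pair_measure_cong[OF refl sets_lborel, of S] by (simp cong: measurable_cong_sets)
  have "(\<integral>\<^sup>+ \<omega>. h (Y \<omega>, X t \<omega>) \<partial>M) = (\<integral>\<^sup>+ q. h q \<partial>distr M (S \<Otimes>\<^sub>M lborel) (\<lambda>\<omega>. (Y \<omega>, X t \<omega>)))"
    by (subst nn_integral_distr) auto
  also have "\<dots> \<le> (\<integral>\<^sup>+ q. h q \<partial>density (distr M S Y \<Otimes>\<^sub>M lborel) ?g)"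
    using sets_D by (intro nn_integral_mono_measure distr_past_future_le assms) auto
  also have "\<dots> = (\<integral>\<^sup>+ q. ?g q * h q \<partial>distr M S Y \<Otimes>\<^sub>M lborel)"
    by (rule nn_integral_density) (simp_all add: measurable_cong_sets[OF sets_D refl])
  also have "\<dots> = (\<integral>\<^sup>+ \<omega>. \<integral>\<^sup>+ y. ?g (Y \<omega>, y) * h (Y \<omega>, y) \<partial>lborel \<partial>M)"
    by (rule nn_integral_pair_distr[OF sigma_finite_lborel Y]) measurable
  also have "\<dots> = (\<integral>\<^sup>+ \<omega>. \<kappa>1 * \<integral>\<^sup>+ y. h (Y \<omega>, y) * ennreal (gauss_kernel (\<kappa>2 * (t - s)) (X s \<omega>) y) \<partial>lborel \<partial>M)"
    by (intro nn_integral_cong) (simp add: \<pi>_Y nn_integral_cmult[symmetric] measurable_Pair2 ac_simps)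
  also have "\<dots> = \<kappa>1 * (\<integral>\<^sup>+ \<omega>. \<integral>\<^sup>+ y. h (Y \<omega>, y) * ennreal (gauss_kernel (\<kappa>2 * (t - s)) (X s \<omega>) y) \<partial>lborel \<partial>M)"
    by (rule nn_integral_cmult) measurable
  finally show ?thesis .
qed

lemma emeasure_gauss_measure_le_liminf:
  assumes [measurable]: "C \<in> sets borel"
    and s: "\<And>n. 0 \<le> s n" "s \<longlonglongrightarrow> 0" and c: "c \<longlonglongrightarrow> c0" "0 < c0"
  shows "emeasure (gauss_measure c0 x) C
    \<le> liminf (\<lambda>n. \<integral>\<^sup>+ \<omega>. emeasure (gauss_measure (c n) (X (s n) \<omega>)) C \<partial>M)"
proof -
  have Fatou: "emeasure (gauss_measure c0 x) C \<le> liminf (\<lambda>n. emeasure (gauss_measure (c n) (z n)) C)"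
    if z: "z \<longlonglongrightarrow> x" for z
  proof -
    have lim: "(\<lambda>n. ennreal (gauss_kernel (c n) (z n) y) * indicator C y)
        \<longlonglongrightarrow> ennreal (gauss_kernel c0 x y) * indicator C y" for y
      unfolding gauss_kernel_def using c z
      by (cases "y \<in> C") (auto intro!: tendsto_intros)
    then have "emeasure (gauss_measure c0 x) C
        = (\<integral>\<^sup>+ y. liminf (\<lambda>n. ennreal (gauss_kernel (c n) (z n) y) * indicator C y) \<partial>lborel)"
      unfolding emeasure_gauss_measure[OF assms(1)] by (intro nn_integral_cong) (simp add: lim_imp_Liminf[OF _ lim])
    also have "\<dots> \<le> liminf (\<lambda>n. emeasure (gauss_measure (c n) (z n)) C)"
      by (simp add: emeasure_gauss_measure nn_integral_liminf)
    finally show ?thesis .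
  qed
  have "AE \<omega> in M. (\<lambda>n. X (s n) \<omega>) \<longlonglongrightarrow> x"
    using AE_X_0 AE_X_continuous
  proof eventually_elim
    case (elim \<omega>)
    have "(\<lambda>n. X (s n) \<omega>) \<longlonglongrightarrow> X 0 \<omega>"
      using s by (intro continuous_on_tendsto_compose[OF elim(2)]) auto
    then show ?case
      using elim(1) by simp
  qed
  then have "(\<integral>\<^sup>+ \<omega>. emeasure (gauss_measure c0 x) C \<partial>M)
      \<le> (\<integral>\<^sup>+ \<omega>. liminf (\<lambda>n. emeasure (gauss_measure (c n) (X (s n) \<omega>)) C) \<partial>M)"
    by (intro nn_integral_mono_AE) (auto elim: AE_mp intro: Fatou)
  also have "\<dots> \<le> liminf (\<lambda>n. \<integral>\<^sup>+ \<omega>. emeasure (gauss_measure (c n) (X (s n) \<omega>)) C \<partial>M)"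
    by (rule nn_integral_liminf) measurable
  finally show ?thesis
    by (simp add: emeasure_space_1)
qed

lemma emeasure_X_add_compl_le:
  assumes st: "0 < s" "s < t" and [measurable]: "b \<in> sets borel"
  shows "emeasure M {\<omega> \<in> space M. X t \<omega> \<in> b}
    + \<kappa>1 * (\<integral>\<^sup>+ \<omega>. emeasure (gauss_measure (\<kappa>2 * (t - s)) (X s \<omega>)) (- b) \<partial>M) \<le> \<kappa>1"
proof -
  let ?\<Gamma> = "\<lambda>C \<omega>. emeasure (gauss_measure (\<kappa>2 * (t - s)) (X s \<omega>)) C"
  have "space M \<in> sets (natural_filtration M X s)"
    using sets.top[of "natural_filtration M X s"] by (simp add: space_natural_filtration)
  then have "emeasure M {\<omega> \<in> space M. X t \<omega> \<in> b}
      \<le> (\<integral>\<^sup>+ \<omega>. \<integral>\<^sup>+ y. indicator b y * (\<kappa>1 * ennreal (gauss_kernel (\<kappa>2 * (t - s)) (X s \<omega>) y)) \<partial>lborel \<partial>M)"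
    using emeasure_transition_le[OF st, of b "space M"] by (simp add: Int_absorb2 cong: nn_integral_cong)
  also have "\<dots> = \<kappa>1 * (\<integral>\<^sup>+ \<omega>. ?\<Gamma> b \<omega> \<partial>M)"
    by (simp add: emeasure_gauss_measure nn_integral_cmult[symmetric] ac_simps)
  finally have "emeasure M {\<omega> \<in> space M. X t \<omega> \<in> b} + \<kappa>1 * (\<integral>\<^sup>+ \<omega>. ?\<Gamma> (- b) \<omega> \<partial>M)
      \<le> \<kappa>1 * ((\<integral>\<^sup>+ \<omega>. ?\<Gamma> b \<omega> \<partial>M) + (\<integral>\<^sup>+ \<omega>. ?\<Gamma> (- b) \<omega> \<partial>M))"
    by (simp add: distrib_left add_right_mono)
  also have "\<dots> = \<kappa>1 * (\<integral>\<^sup>+ \<omega>. 1 \<partial>M)"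
    using st \<kappa>2_pos by (subst nn_integral_add[symmetric]) (simp_all add: gauss_measure_add_compl)
  finally show ?thesis
    by (simp add: emeasure_space_1)
qed

text \<open>The transition bound is only available from positive times, so \<open>X t\<close> is reached through the
  transitions from times \<open>s n \<down> 0\<close>. Fatou's lemma (with path continuity at \<open>0\<close>) only bounds the
  limit from below, so it is applied to the Gaussian mass of the complement of \<open>b\<close>.\<close>
lemma emeasure_X_le:
  assumes t: "0 < t" and [measurable]: "b \<in> sets borel"
  shows "emeasure M {\<omega> \<in> space M. X t \<omega> \<in> b} \<le> \<kappa>1 * emeasure (gauss_measure (\<kappa>2 * t) x) b"
proof -
  define P where "P = emeasure M {\<omega> \<in> space M. X t \<omega> \<in> b}"
  define s where "s n = t / real (n + 2)" for n
  define c where "c n = \<kappa>2 * (t - s n)" for n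
  define a where "a n = (\<integral>\<^sup>+ \<omega>. emeasure (gauss_measure (c n) (X (s n) \<omega>)) (- b) \<partial>M)" for n
  have s_bounds: "0 < s n" "s n < t" for n
    unfolding s_def using t by (auto simp: field_simps intro!: add_pos_nonneg)
  have bound: "P + \<kappa>1 * a n \<le> \<kappa>1" for n
    unfolding P_def a_def c_def using s_bounds by (intro emeasure_X_add_compl_le) auto
  have "s \<longlonglongrightarrow> 0"
    unfolding s_def using LIMSEQ_ignore_initial_segment[OF lim_const_over_n[of t], of 2] by simp
  then have "c \<longlonglongrightarrow> \<kappa>2 * t"
    unfolding c_def by (auto intro!: tendsto_eq_intros)
  with \<open>s \<longlonglongrightarrow> 0\<close> have "emeasure (gauss_measure (\<kappa>2 * t) x) (- b) \<le> liminf a"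
    unfolding a_def using s_bounds \<kappa>2_pos t
    by (intro emeasure_gauss_measure_le_liminf) (auto intro: less_imp_le)
  then have "P + \<kappa>1 * emeasure (gauss_measure (\<kappa>2 * t) x) (- b) \<le> P + \<kappa>1 * liminf a"
    by (intro add_left_mono mult_left_mono) auto
  also have "\<dots> = liminf (\<lambda>n. P + \<kappa>1 * a n)"
  proof (rule Liminf_compose_continuous_mono[symmetric])
    show "continuous_on UNIV (\<lambda>u. P + ennreal \<kappa>1 * u)"
      by (intro continuous_on_add_ennreal continuous_on_const ennreal_continuous_on_cmult continuous_on_id) simp
    show "mono (\<lambda>u. P + ennreal \<kappa>1 * u)"
      by (auto simp: mono_def intro: add_left_mono mult_left_mono)
  qed simp
  also have "\<dots> \<le> \<kappa>1"
    by (rule Liminf_le) (use bound in auto)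
  also have "\<dots> = \<kappa>1 * emeasure (gauss_measure (\<kappa>2 * t) x) b + \<kappa>1 * emeasure (gauss_measure (\<kappa>2 * t) x) (- b)"
    using gauss_measure_add_compl[of "\<kappa>2 * t" b x] \<kappa>2_pos t by (simp flip: distrib_left)
  finally have "\<kappa>1 * emeasure (gauss_measure (\<kappa>2 * t) x) (- b) + P
      \<le> \<kappa>1 * emeasure (gauss_measure (\<kappa>2 * t) x) (- b) + \<kappa>1 * emeasure (gauss_measure (\<kappa>2 * t) x) b"
    by (simp add: ac_simps)
  moreover have "emeasure (gauss_measure (\<kappa>2 * t) x) (- b) \<noteq> \<infinity>"
    using prob_space.emeasure_le_1[OF prob_space_gauss_measure, of "\<kappa>2 * t" x "- b"] \<kappa>2_pos t
    by (auto simp: top_unique)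
  ultimately show ?thesis
    unfolding P_def by (simp add: ennreal_add_left_cancel_le ennreal_mult_eq_top_iff)
qed

lemma nn_integral_X_le:
  assumes "0 < t" and [measurable]: "\<phi> \<in> borel_measurable borel"
  shows "(\<integral>\<^sup>+ \<omega>. \<phi> (X t \<omega>) \<partial>M) \<le> \<kappa>1 * (\<integral>\<^sup>+ y. \<phi> y * ennreal (gauss_kernel (\<kappa>2 * t) x y) \<partial>lborel)"
proof -
  have "distr M borel (X t) \<le> density lborel (\<lambda>y. \<kappa>1 * ennreal (gauss_kernel (\<kappa>2 * t) x y))"
  proof (subst le_measure, simp, intro ballI)
    fix A :: "(real^'d) set"
    assume "A \<in> sets (distr M borel (X t))"
    then have [measurable]: "A \<in> sets borel"
      by simp
    have "emeasure (distr M borel (X t)) A = emeasure M {\<omega> \<in> space M. X t \<omega> \<in> A}"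
      by (subst emeasure_distr) (auto intro!: arg_cong[where f="emeasure M"])
    also have "\<dots> \<le> \<kappa>1 * emeasure (gauss_measure (\<kappa>2 * t) x) A"
      using assms by (intro emeasure_X_le) auto
    also have "\<dots> = emeasure (density lborel (\<lambda>y. \<kappa>1 * ennreal (gauss_kernel (\<kappa>2 * t) x y))) A"
      by (simp add: emeasure_gauss_measure emeasure_density nn_integral_cmult[symmetric] ac_simps)
    finally show "emeasure (distr M borel (X t)) A \<le> emeasure (density lborel (\<lambda>y. \<kappa>1 * ennreal (gauss_kernel (\<kappa>2 * t) x y))) A" .
  qed
  then have "(\<integral>\<^sup>+ y. \<phi> y \<partial>distr M borel (X t))
      \<le> (\<integral>\<^sup>+ y. \<phi> y \<partial>density lborel (\<lambda>y. \<kappa>1 * ennreal (gauss_kernel (\<kappa>2 * t) x y)))"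
    by (intro nn_integral_mono_measure) simp_all
  then show ?thesis
    by (simp add: nn_integral_distr nn_integral_density nn_integral_cmult[symmetric] ac_simps)
qed

lemma kappa1_ge_1: "1 \<le> \<kappa>1"
proof -
  have "ennreal 1 = (\<integral>\<^sup>+ \<omega>. 1 \<partial>M)"
    by (simp add: emeasure_space_1)
  also have "\<dots> \<le> \<kappa>1 * (\<integral>\<^sup>+ y. ennreal (gauss_kernel \<kappa>2 x y) \<partial>lborel)"
    using nn_integral_X_le[of 1 "\<lambda>_. 1"] by simp
  also have "\<dots> = \<kappa>1"
    using \<kappa>2_pos by (simp add: nn_integral_gauss_kernel)
  finally show ?thesis
    using \<kappa>1_pos by simp
qed

lemma nn_integral_X_step_le:
  assumes s_pos: "\<And>j. j < Suc k \<Longrightarrow> 0 < s j" and s_mono: "strict_mono_on {..<Suc k} s"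
    and h[measurable]: "h \<in> borel_measurable (PiM {..<Suc k} (\<lambda>_. borel :: (real^'d) measure))"
  shows "(\<integral>\<^sup>+ \<omega>. h (\<lambda>j\<in>{..<Suc k}. X (s j) \<omega>) \<partial>M)
    \<le> \<kappa>1 * (\<integral>\<^sup>+ \<omega>. gauss_step x (\<lambda>j. \<kappa>2 * s j) k h (\<lambda>j\<in>{..<k}. X (s j) \<omega>) \<partial>M)"
proof (cases k)
  case 0
  have "(\<lambda>y. (\<lambda>_. undefined)(0 := y)) \<in> measurable borel (PiM {..<Suc 0} (\<lambda>_. borel :: (real^'d) measure))"
    by (rule measurable_fun_upd_lessThan) (auto simp: space_PiM)
  from measurable_comp[OF this, of h] have [measurable]: "(\<lambda>y. h ((\<lambda>_. undefined)(0 := y))) \<in> borel_measurable borel"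
    using h 0 by (simp add: comp_def)
  have "(\<integral>\<^sup>+ \<omega>. h (\<lambda>j\<in>{..<Suc k}. X (s j) \<omega>) \<partial>M) = (\<integral>\<^sup>+ \<omega>. h ((\<lambda>_. undefined)(0 := X (s 0) \<omega>)) \<partial>M)"
    using 0 by (simp only: restrict_lessThan_Suc) (simp add: restrict_def)
  also have "\<dots> \<le> \<kappa>1 * (\<integral>\<^sup>+ y. h ((\<lambda>_. undefined)(0 := y)) * ennreal (gauss_kernel (\<kappa>2 * s 0) x y) \<partial>lborel)"
    using s_pos 0 by (intro nn_integral_X_le) auto
  also have "\<dots> = \<kappa>1 * (\<integral>\<^sup>+ \<omega>. gauss_step x (\<lambda>j. \<kappa>2 * s j) k h (\<lambda>j\<in>{..<k}. X (s j) \<omega>) \<partial>M)"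
    using 0 by (simp add: gauss_step_def prev_time_def prev_point_def emeasure_space_1 restrict_def)
  finally show ?thesis .
next
  case (Suc k')
  define Y where "Y \<omega> = (\<lambda>j\<in>{..<k}. X (s j) \<omega>)" for \<omega>
  have Y: "Y \<in> measurable M (PiM {..<k} (\<lambda>_. borel))"
    unfolding Y_def by measurable
  have Y_adapted: "Y \<in> measurable (natural_filtration M X (s k')) (PiM {..<k} (\<lambda>_. borel))"
    unfolding Y_def using Suc s_pos
    by (intro measurable_restrict measurable_natural_filtration)
      (auto simp: less_imp_le intro!: strict_mono_on_leD[OF s_mono])
  have h_upd: "(\<lambda>(z, y). h (z(k := y))) \<in> borel_measurable (PiM {..<k} (\<lambda>_. borel) \<Otimes>\<^sub>M borel)"
    by measurable
  have st: "0 < s k'" "s k' < s k"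
    using Suc s_pos strict_mono_onD[OF s_mono, of k' k] by auto
  have "(\<integral>\<^sup>+ \<omega>. (\<lambda>(z, y). h (z(k := y))) (Y \<omega>, X (s k) \<omega>) \<partial>M)
      \<le> \<kappa>1 * (\<integral>\<^sup>+ \<omega>. \<integral>\<^sup>+ y. (\<lambda>(z, y). h (z(k := y))) (Y \<omega>, y) *
          ennreal (gauss_kernel (\<kappa>2 * (s k - s k')) (X (s k') \<omega>) y) \<partial>lborel \<partial>M)"
    by (rule nn_integral_transition_le[OF st Y Y_adapted _ _ h_upd, of "\<lambda>z. z k'"])
      (auto simp: Suc Y_def measurable_component_singleton)
  then show ?thesis
    using Suc by (simp add: Y_def restrict_lessThan_Suc gauss_step_def prev_time_def prev_point_def right_diff_distrib)
qed

lemma nn_integral_X_chain_le: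
  assumes "\<And>j. j < k \<Longrightarrow> 0 < s j" "strict_mono_on {..<k} s"
    and "h \<in> borel_measurable (PiM {..<k} (\<lambda>_. borel :: (real^'d) measure))"
  shows "(\<integral>\<^sup>+ \<omega>. h (\<lambda>j\<in>{..<k}. X (s j) \<omega>) \<partial>M) \<le> \<kappa>1 ^ k * gauss_chain x (\<lambda>j. \<kappa>2 * s j) k h"
  using assms
proof (induction k arbitrary: h)
  case 0
  then show ?case
    by (simp add: emeasure_space_1)
next
  case (Suc k)
  have "(\<integral>\<^sup>+ \<omega>. h (\<lambda>j\<in>{..<Suc k}. X (s j) \<omega>) \<partial>M)
      \<le> \<kappa>1 * (\<integral>\<^sup>+ \<omega>. gauss_step x (\<lambda>j. \<kappa>2 * s j) k h (\<lambda>j\<in>{..<k}. X (s j) \<omega>) \<partial>M)"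
    using Suc.prems by (rule nn_integral_X_step_le)
  also have "\<dots> \<le> \<kappa>1 * (\<kappa>1 ^ k * gauss_chain x (\<lambda>j. \<kappa>2 * s j) k (gauss_step x (\<lambda>j. \<kappa>2 * s j) k h))"
    using Suc.prems by (intro mult_left_mono Suc.IH) (auto intro: monotone_on_subset[of "{..<Suc k}"])
  also have "\<dots> = \<kappa>1 ^ Suc k * gauss_chain x (\<lambda>j. \<kappa>2 * s j) (Suc k) h"
    using \<kappa>1_pos by (simp add: ennreal_mult mult.assoc)
  finally show ?case .
qed

end

locale standard_brownian_motion =
  fixes N :: "'v measure" and B :: "real \<Rightarrow> 'v \<Rightarrow> real^'d" and x :: "real^'d"
  assumes brownian: "std_brownian_motion N B x"
begin

sublocale prob_space N
  using brownian by (simp add: std_brownian_motion_def)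

lemma measurable_B[measurable]: "B t \<in> borel_measurable N"
  using brownian by (simp add: std_brownian_motion_def)

lemma AE_B_0: "AE \<omega> in N. B 0 \<omega> = x"
  using brownian by (simp add: std_brownian_motion_def)

lemma distributed_increment:
  "0 \<le> s \<Longrightarrow> s < t \<Longrightarrow> distributed N lborel (\<lambda>\<omega>. B t \<omega> - B s \<omega>) (\<lambda>y. ennreal (gauss_kernel (t - s) 0 y))"
  using brownian by (simp add: std_brownian_motion_def)

lemma indep_increments:
  "0 \<le> ts 0 \<Longrightarrow> (\<And>i. i < m \<Longrightarrow> ts i \<le> ts (Suc i)) \<Longrightarrow>
    indep_vars (\<lambda>_. borel) (\<lambda>i \<omega>. B (ts (Suc i)) \<omega> - B (ts i) \<omega>) {..<m}"
  using brownian by (simp add: std_brownian_motion_def)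

lemma indep_var_positions_last_increment:
  assumes c_pos: "\<And>j. j < Suc k \<Longrightarrow> 0 < c j" and c_mono: "strict_mono_on {..<Suc k} c"
  shows "indep_var
      (PiM {..<k} (\<lambda>_. borel)) (\<lambda>\<omega>. \<lambda>j\<in>{..<k}. x + (\<Sum>i<Suc j. B (c i) \<omega> - B (prev_time c i) \<omega>))
      (PiM {k} (\<lambda>_. borel)) (\<lambda>\<omega>. \<lambda>i\<in>{k}. B (c i) \<omega> - B (prev_time c i) \<omega>)"
proof -
  let ?I = "\<lambda>i \<omega>. B (c i) \<omega> - B (prev_time c i) \<omega>"
  have "indep_vars (\<lambda>_. borel) ?I {..<Suc k}"
    using indep_increments[of "prev_time c" "Suc k"] c_pos strict_mono_onD[OF c_mono]
    by (fastforce simp: prev_time_def less_imp_le)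
  then have "indep_var (PiM {..<k} (\<lambda>_. borel)) (\<lambda>\<omega>. \<lambda>i\<in>{..<k}. ?I i \<omega>) (PiM {k} (\<lambda>_. borel)) (\<lambda>\<omega>. \<lambda>i\<in>{k}. ?I i \<omega>)"
    by (rule indep_var_restrict) auto
  moreover have "(\<lambda>w. \<lambda>j\<in>{..<k}. x + (\<Sum>i<Suc j. w i))
      \<in> measurable (PiM {..<k} (\<lambda>_. borel)) (PiM {..<k} (\<lambda>_. borel :: (real^'d) measure))"
    by (intro measurable_restrict borel_measurable_add measurable_const borel_measurable_sum
        measurable_component_singleton) auto
  ultimately have "indep_var (PiM {..<k} (\<lambda>_. borel))
      ((\<lambda>w. \<lambda>j\<in>{..<k}. x + (\<Sum>i<Suc j. w i)) \<circ> (\<lambda>\<omega>. \<lambda>i\<in>{..<k}. ?I i \<omega>))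
    (PiM {k} (\<lambda>_. borel)) (id \<circ> (\<lambda>\<omega>. \<lambda>i\<in>{k}. ?I i \<omega>))"
    by (intro indep_var_compose) auto
  moreover have "(\<lambda>w. \<lambda>j\<in>{..<k}. x + (\<Sum>i<Suc j. w i)) \<circ> (\<lambda>\<omega>. \<lambda>i\<in>{..<k}. ?I i \<omega>)
      = (\<lambda>\<omega>. \<lambda>j\<in>{..<k}. x + (\<Sum>i<Suc j. ?I i \<omega>))"
    by (auto simp: fun_eq_iff intro!: sum.cong)
  ultimately show ?thesis
    by simp
qed

lemma AE_partial_sums_increments_eq:
  "AE \<omega> in N. B 0 \<omega> = x \<and> (\<forall>j. x + (\<Sum>i<Suc j. B (c i) \<omega> - B (prev_time c i) \<omega>) = B (c j) \<omega>)"
  using AE_B_0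
proof eventually_elim
  case (elim \<omega>)
  have "(\<Sum>i<Suc j. B (c i) \<omega> - B (prev_time c i) \<omega>) = B (c j) \<omega> - B 0 \<omega>" for j
    using sum_lessThan_telescope[of "\<lambda>i. B (prev_time c i) \<omega>" "Suc j"] by (simp add: prev_time_def)
  then show ?case
    using elim by (simp del: sum.lessThan_Suc)
qed

lemma gauss_step_eq_nn_integral_increment:
  assumes "0 \<le> prev_time c k" "prev_time c k < c k"
    and h[measurable]: "h \<in> borel_measurable (PiM {..<Suc k} (\<lambda>_. borel :: (real^'d) measure))"
    and z: "z \<in> space (PiM {..<k} (\<lambda>_. borel))"
  shows "gauss_step x c k h z = (\<integral>\<^sup>+ \<omega>. h (z(k := prev_point x k z + (B (c k) \<omega> - B (prev_time c k) \<omega>))) \<partial>N)"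
proof -
  have [measurable]: "(\<lambda>u. h (z(k := prev_point x k z + u))) \<in> borel_measurable borel"
    using z by measurable
  have "gauss_step x c k h z
      = (\<integral>\<^sup>+ u. ennreal (gauss_kernel (c k - prev_time c k) 0 u) * h (z(k := prev_point x k z + u)) \<partial>lborel)"
    unfolding gauss_step_def using z
    by (subst nn_integral_lborel_translate[where z="prev_point x k z"])
      (measurable, simp add: gauss_kernel_translate[of _ "prev_point x k z"] mult.commute)
  also have "\<dots> = (\<integral>\<^sup>+ u. h (z(k := prev_point x k z + u)) \<partial>distr N lborel (\<lambda>\<omega>. B (c k) \<omega> - B (prev_time c k) \<omega>))"
    using distributed_distr_eq_density[OF distributed_increment[OF assms(1,2)]]
    by (simp add: nn_integral_density)
  also have "\<dots> = (\<integral>\<^sup>+ \<omega>. h (z(k := prev_point x k z + (B (c k) \<omega> - B (prev_time c k) \<omega>))) \<partial>N)"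
    by (subst nn_integral_distr) auto
  finally show ?thesis .
qed

lemma nn_integral_B_step:
  assumes c_pos: "\<And>j. j < Suc k \<Longrightarrow> 0 < c j" and c_mono: "strict_mono_on {..<Suc k} c"
    and h[measurable]: "h \<in> borel_measurable (PiM {..<Suc k} (\<lambda>_. borel :: (real^'d) measure))"
  shows "(\<integral>\<^sup>+ \<omega>. h (\<lambda>j\<in>{..<Suc k}. B (c j) \<omega>) \<partial>N)
    = (\<integral>\<^sup>+ \<omega>. gauss_step x c k h (\<lambda>j\<in>{..<k}. B (c j) \<omega>) \<partial>N)"
proof -
  define I where "I i \<omega> = B (c i) \<omega> - B (prev_time c i) \<omega>" for i \<omega>
  define Y where "Y \<omega> = (\<lambda>j\<in>{..<k}. x + (\<Sum>i<Suc j. I i \<omega>))" for \<omega>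
  define D where "D \<omega> = (\<lambda>i\<in>{k}. I i \<omega>)" for \<omega>
  have indep: "indep_var (PiM {..<k} (\<lambda>_. borel)) Y (PiM {k} (\<lambda>_. borel)) D"
    unfolding Y_def D_def I_def using c_pos c_mono by (rule indep_var_positions_last_increment)
  have [measurable]: "Y \<in> measurable N (PiM {..<k} (\<lambda>_. borel))" "D \<in> measurable N (PiM {k} (\<lambda>_. borel))"
    using indep by (auto dest: indep_var_rv1 indep_var_rv2)
  have times: "0 \<le> prev_time c k" "prev_time c k < c k"
    using c_pos[of "k - 1"] c_pos[of k] strict_mono_onD[OF c_mono, of "k - 1" k]
    by (auto simp: prev_time_def less_imp_le)
  define H where "H q = h ((fst q)(k := prev_point x k (fst q) + snd q k))" for q
  have [measurable]: "H \<in> borel_measurable (PiM {..<k} (\<lambda>_. borel) \<Otimes>\<^sub>M PiM {k} (\<lambda>_. borel))"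
    unfolding H_def by measurable
  have inner: "(\<integral>\<^sup>+ w. H (z, w) \<partial>distr N (PiM {k} (\<lambda>_. borel)) D) = gauss_step x c k h z"
    if z: "z \<in> space (PiM {..<k} (\<lambda>_. borel))" for z
    using z by (subst nn_integral_distr)
      (auto simp: H_def D_def I_def measurable_Pair2 gauss_step_eq_nn_integral_increment[OF times h z])
  have AE: "AE \<omega> in N. (\<lambda>j\<in>{..<k}. B (c j) \<omega>) = Y \<omega> \<and> B (c k) \<omega> = prev_point x k (Y \<omega>) + I k \<omega>"
    using AE_partial_sums_increments_eq[of c]
  proof eventually_elim
    case (elim \<omega>)
    have Y: "Y \<omega> = (\<lambda>j\<in>{..<k}. B (c j) \<omega>)"
      unfolding Y_def I_def using elim by (intro restrict_ext) blast
    have "prev_point x k (Y \<omega>) = B (prev_time c k) \<omega>"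
      using elim by (simp add: Y prev_point_def prev_time_def)
    then show ?case
      using Y by (simp add: I_def)
  qed
  have "(\<integral>\<^sup>+ \<omega>. h (\<lambda>j\<in>{..<Suc k}. B (c j) \<omega>) \<partial>N) = (\<integral>\<^sup>+ \<omega>. H (Y \<omega>, D \<omega>) \<partial>N)"
    using AE
  proof (intro nn_integral_cong_AE, eventually_elim)
    case (elim \<omega>)
    then show ?case
      by (simp only: restrict_lessThan_Suc) (simp add: H_def D_def)
  qed
  also have "\<dots> = (\<integral>\<^sup>+ \<omega>. \<integral>\<^sup>+ w. H (Y \<omega>, w) \<partial>distr N (PiM {k} (\<lambda>_. borel)) D \<partial>N)"
    using indep by (rule nn_integral_indep_var) measurable
  also have "\<dots> = (\<integral>\<^sup>+ \<omega>. gauss_step x c k h (Y \<omega>) \<partial>N)"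
    by (intro nn_integral_cong inner) (simp add: measurable_space[of Y N])
  also have "\<dots> = (\<integral>\<^sup>+ \<omega>. gauss_step x c k h (\<lambda>j\<in>{..<k}. B (c j) \<omega>) \<partial>N)"
    using AE by (intro nn_integral_cong_AE) (auto elim!: eventually_mono)
  finally show ?thesis .
qed

lemma nn_integral_B_chain:
  assumes "\<And>j. j < k \<Longrightarrow> 0 < c j" "strict_mono_on {..<k} c"
    and "h \<in> borel_measurable (PiM {..<k} (\<lambda>_. borel :: (real^'d) measure))"
  shows "(\<integral>\<^sup>+ \<omega>. h (\<lambda>j\<in>{..<k}. B (c j) \<omega>) \<partial>N) = gauss_chain x c k h"
  using assms
proof (induction k arbitrary: h)
  case 0
  then show ?case
    by (simp add: emeasure_space_1)
next
  case (Suc k)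
  have "(\<integral>\<^sup>+ \<omega>. h (\<lambda>j\<in>{..<Suc k}. B (c j) \<omega>) \<partial>N)
      = (\<integral>\<^sup>+ \<omega>. gauss_step x c k h (\<lambda>j\<in>{..<k}. B (c j) \<omega>) \<partial>N)"
    using Suc.prems by (rule nn_integral_B_step)
  also have "\<dots> = gauss_chain x c (Suc k) h"
    using Suc.prems by (simp add: Suc.IH monotone_on_subset[of "{..<Suc k}"])
  finally show ?case .
qed

end

theorem lemma3p1:
  fixes M :: "'w measure" and X :: "real \<Rightarrow> 'w \<Rightarrow> real^'d" and x :: "real^'d"
    and p :: "real \<Rightarrow> real^'d \<Rightarrow> real \<Rightarrow> real^'d \<Rightarrow> real"
    and \<kappa>1 \<kappa>2 :: real
    and N :: "'v measure" and B :: "real \<Rightarrow> 'v \<Rightarrow> real^'d"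
    and n :: nat and t :: "nat \<Rightarrow> real" and f :: "(nat \<Rightarrow> real^'d) \<Rightarrow> real"
  assumes "markov_diffusion_with_density M X x p"
    and "\<kappa>1 > 0" and "\<kappa>2 > 0"
    and "\<And>s t z y. 0 < s \<Longrightarrow> s < t \<Longrightarrow> p s z t y \<le> \<kappa>1 * gauss_kernel (\<kappa>2 * (t - s)) z y"
    and "std_brownian_motion N B x"
    and "\<And>i. i < n \<Longrightarrow> 0 < t i"
    and "cylindrical_fun n f"
    and "\<And>y. y \<in> PiE {..<n} (\<lambda>_. UNIV) \<Longrightarrow> f y \<ge> 0"
  shows "(\<integral>\<^sup>+ \<omega>. ennreal (f (\<lambda>i\<in>{..<n}. X (t i) \<omega>)) \<partial>M)
           \<le> ennreal (\<kappa>1 ^ n) * (\<integral>\<^sup>+ \<omega>. ennreal (f (\<lambda>i\<in>{..<n}. B (\<kappa>2 * t i) \<omega>)) \<partial>N)"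
proof -
  interpret X: gaussian_dominated_diffusion M X x p \<kappa>1 \<kappa>2
    using assms(1-4) by unfold_locales
  interpret B: standard_brownian_motion N B x
    using assms(5) by unfold_locales
  have "f \<in> borel_measurable (PiM {..<n} (\<lambda>_. borel))"
    using assms(7) by (simp add: cylindrical_fun_def)
  then obtain m s h where "m \<le> n" and s_mono: "strict_mono_on {..<m} s"
    and s_range: "\<And>j. j < m \<Longrightarrow> s j \<in> t ` {..<n}" and h: "h \<in> borel_measurable (PiM {..<m} (\<lambda>_. borel))"
    and reindex: "\<And>Z. ennreal (f (\<lambda>i\<in>{..<n}. Z (t i))) = h (\<lambda>j\<in>{..<m}. Z (s j))"
    using obtain_strict_mono_reindexing[where t = t] by blast
  have s_pos: "\<And>j. j < m \<Longrightarrow> 0 < s j"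
    using s_range assms(6) by fastforce
  have "(\<integral>\<^sup>+ \<omega>. ennreal (f (\<lambda>i\<in>{..<n}. X (t i) \<omega>)) \<partial>M) = (\<integral>\<^sup>+ \<omega>. h (\<lambda>j\<in>{..<m}. X (s j) \<omega>) \<partial>M)"
    by (intro nn_integral_cong) (rule reindex)
  also have "\<dots> \<le> \<kappa>1 ^ m * gauss_chain x (\<lambda>j. \<kappa>2 * s j) m h"
    using s_pos s_mono h by (rule X.nn_integral_X_chain_le)
  also have "\<dots> = \<kappa>1 ^ m * (\<integral>\<^sup>+ \<omega>. h (\<lambda>j\<in>{..<m}. B (\<kappa>2 * s j) \<omega>) \<partial>N)"
    using s_pos s_mono h assms(3)
    by (subst B.nn_integral_B_chain) (auto simp: strict_mono_on_def)
  also have "\<dots> \<le> \<kappa>1 ^ n * (\<integral>\<^sup>+ \<omega>. h (\<lambda>j\<in>{..<m}. B (\<kappa>2 * s j) \<omega>) \<partial>N)"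
    using \<open>m \<le> n\<close> X.kappa1_ge_1 by (intro mult_right_mono ennreal_leI power_increasing) auto
  also have "\<dots> = \<kappa>1 ^ n * (\<integral>\<^sup>+ \<omega>. ennreal (f (\<lambda>i\<in>{..<n}. B (\<kappa>2 * t i) \<omega>)) \<partial>N)"
    by (intro arg_cong2[where f="(*)"] refl nn_integral_cong) (rule reindex[symmetric])
  finally show ?thesis .
qed

end
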